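(* Let $X$ be a regular Hausdorff space. Then $X$ is an $\aleph_k$-space if and only if $\mathcal{K}(X)$ is an $\aleph_k$-space; and $X$ is an $\overline{\aleph}_k$-space if and only if $\mathcal{K}(X)$ is an $\overline{\aleph}_k$-space.
   Context: $\mathcal{K}(X)$ is the space of nonempty compact subsets of $X$ with the Vietoris topology (base: $\langle U_1,\dots,U_k\rangle=\{K: K\subset\bigcup U_i,\ K\cap U_j\neq\emptyset\ \forall j\}$, $U_i$ open). A family $\mathcal{P}$ of subsets of $Y$ is a $k$-network if for every compact $K$ and open $U\supset K$ some finite $\mathcal{P}'\subset\mathcal{P}$ satisfies $K\subset\bigcup\mathcal{P}'\subset U$; it is compact-countable if each compact set meets only countably many members. A regular space is an $\aleph_k$-space if it has a compact-countable $k$-network, and an $\overline{\aleph}_k$-space if it has a compact-countable $k$-network consisting of closed sets. *)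

theory Defs
  imports "HOL-Analysis.Analysis"
begin

definition vietoris_basic :: "'a topology \<Rightarrow> 'a set set \<Rightarrow> 'a set set" where
  "vietoris_basic X \<U> =
     {K. K \<subseteq> topspace X \<and> compactin X K \<and> K \<noteq> {} \<and> K \<subseteq> \<Union>\<U> \<and> (\<forall>U\<in>\<U>. K \<inter> U \<noteq> {})}"

definition hyperspace :: "'a topology \<Rightarrow> 'a set topology" where
  "hyperspace X =
     subtopology
       (topology_generated_by
          {vietoris_basic X \<U> | \<U>. finite \<U> \<and> \<U> \<noteq> {} \<and> (\<forall>U\<in>\<U>. openin X U)})
       {K. K \<subseteq> topspace X \<and> compactin X K \<and> K \<noteq> {}}"

definition k_network :: "'a topology \<Rightarrow> 'a set set \<Rightarrow> bool" where
  "k_network Y \<P> \<longleftrightarrow> (\<forall>P\<in>\<P>. P \<subseteq> topspace Y) \<and>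
     (\<forall>K U. compactin Y K \<and> openin Y U \<and> K \<subseteq> U \<longrightarrow>
        (\<exists>\<P>'. \<P>' \<subseteq> \<P> \<and> finite \<P>' \<and> K \<subseteq> \<Union>\<P>' \<and> \<Union>\<P>' \<subseteq> U))"

definition compact_countable :: "'a topology \<Rightarrow> 'a set set \<Rightarrow> bool" where
  "compact_countable Y \<P> \<longleftrightarrow>
     (\<forall>K. compactin Y K \<longrightarrow> countable {P\<in>\<P>. P \<inter> K \<noteq> {}})"

definition aleph_k_space :: "'a topology \<Rightarrow> bool" where
  "aleph_k_space Y \<longleftrightarrow> regular_space Y \<and>
     (\<exists>\<P>. k_network Y \<P> \<and> compact_countable Y \<P>)"

definition closed_aleph_k_space :: "'a topology \<Rightarrow> bool" where
  "closed_aleph_k_space Y \<longleftrightarrow> regular_space Y \<and>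
     (\<exists>\<P>. k_network Y \<P> \<and> compact_countable Y \<P> \<and> (\<forall>P\<in>\<P>. closedin Y P))"

end

theory Submission
  imports Defs
begin

text \<open>
  If \<open>\<P>\<close> is a k-network of \<open>X\<close>, the sets \<open>vietoris X (\<Union>\<F>) \<F>\<close> with
  \<open>\<F> \<subseteq> \<P>\<close> finite form a k-network of the hyperspace. Let \<open>\<K>\<close> be compact inside an open
  set of the hyperspace and \<open>K \<in> \<K>\<close>. By regularity \<open>K\<close> lies in a basic set
  \<open>vietoris X V \<V>\<close> whose closure \<open>vietoris X (cl V) (cl ` \<V>)\<close> is contained in a basic set
  \<open>vietoris X U \<U>\<close> inside the open set. The members of \<open>\<K>\<close> lying in that closure have a
  compact union \<open>M\<close>, so finitely many members of \<open>\<P>\<close> cover \<open>M\<close> within \<open>U\<close> and, for each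
  \<open>u \<in> \<U>\<close>, cover \<open>cl v \<inter> M\<close> within \<open>u\<close>; recording which of them a compactum meets gives
  finitely many network sets covering this part of \<open>\<K>\<close> inside \<open>vietoris X U \<U>\<close>.
  Compactness of \<open>\<K>\<close> glues these local covers.
\<close>

definition vietoris :: "'a topology \<Rightarrow> 'a set \<Rightarrow> 'a set set \<Rightarrow> 'a set set" where
  "vietoris X U \<U> = {L. compactin X L \<and> L \<noteq> {} \<and> L \<subseteq> U \<and> (\<forall>u\<in>\<U>. L \<inter> u \<noteq> {})}"

definition vietoris_basis :: "'a topology \<Rightarrow> 'a set set set" where
  "vietoris_basis X = {vietoris_basic X \<U> | \<U>. finite \<U> \<and> \<U> \<noteq> {} \<and> (\<forall>U\<in>\<U>. openin X U)}"

lemma vietoris_basic_eq_vietoris: "vietoris_basic X \<U> = vietoris X (\<Union>\<U>) \<U>"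
  by (auto simp: vietoris_basic_def vietoris_def dest: compactin_subset_topspace)

lemma vietoris_Int: "vietoris X U \<U> \<inter> vietoris X V \<V> = vietoris X (U \<inter> V) (\<U> \<union> \<V>)"
  by (auto simp: vietoris_def)

lemma vietoris_mono:
  assumes "C \<subseteq> U" "\<And>u. u \<in> \<U> \<Longrightarrow> \<exists>c\<in>\<C>. c \<subseteq> u"
  shows "vietoris X C \<C> \<subseteq> vietoris X U \<U>"
  using assms by (fastforce simp: vietoris_def)

lemma vietoris_subset_closure: "vietoris X V \<V> \<subseteq> vietoris X (X closure_of V) ((closure_of) X ` \<V>)"
proof
  fix L assume "L \<in> vietoris X V \<V>"
  then have L: "compactin X L" "L \<noteq> {}" "L \<subseteq> V" "\<forall>v\<in>\<V>. L \<inter> v \<noteq> {}"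
    by (simp_all add: vietoris_def)
  have closure: "L \<inter> S \<subseteq> X closure_of S" for S
    using compactin_subset_topspace[OF L(1)] closure_of_subset_Int[of X S] by blast
  have "L \<subseteq> X closure_of V"
    using closure[of V] L(3) by blast
  moreover have "L \<inter> w \<noteq> {}" if w: "w \<in> (closure_of) X ` \<V>" for w
  proof -
    obtain v where "v \<in> \<V>" "w = X closure_of v"
      using w by blast
    with L(4) closure[of v] show ?thesis
      by blast
  qed
  ultimately show "L \<in> vietoris X (X closure_of V) ((closure_of) X ` \<V>)"
    using L(1,2) by (simp add: vietoris_def)
qed

lemma openin_hyperspace:
  "openin (hyperspace X) \<W> \<longleftrightarrow>
     (\<exists>G. generate_topology_on (vietoris_basis X) G \<and> \<W> = G \<inter> {K. compactin X K \<and> K \<noteq> {}})"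
proof -
  have "{K. K \<subseteq> topspace X \<and> compactin X K \<and> K \<noteq> {}} = {K. compactin X K \<and> K \<noteq> {}}"
    using compactin_subset_topspace by blast
  then show ?thesis
    unfolding hyperspace_def vietoris_basis_def openin_subtopology openin_topology_generated_by_iff
    by auto
qed

lemma topspace_hyperspace: "topspace (hyperspace X) = {K. compactin X K \<and> K \<noteq> {}}"
proof -
  have "K \<in> vietoris_basic X {topspace X}" if "compactin X K" "K \<noteq> {}" for K
    using that Int_absorb2[OF compactin_subset_topspace[OF that(1)]]
    by (simp add: vietoris_basic_def compactin_subset_topspace)
  moreover have "vietoris_basic X {topspace X} \<in> vietoris_basis X"
    unfolding vietoris_basis_def by blast
  ultimately show ?thesis
    unfolding hyperspace_def vietoris_basis_def[symmetric] by (auto dest: compactin_subset_topspace)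
qed

lemma vietoris_subset_topspace_hyperspace: "vietoris X U \<U> \<subseteq> topspace (hyperspace X)"
  by (auto simp: topspace_hyperspace vietoris_def)

lemma openin_hyperspace_vietoris:
  assumes "openin X U" "finite \<U>" "\<forall>u\<in>\<U>. openin X u"
  shows "openin (hyperspace X) (vietoris X U \<U>)"
proof -
  let ?\<U> = "insert U ((\<inter>) U ` \<U>)"
  have "vietoris X U \<U> = vietoris_basic X ?\<U>"
    by (auto simp: vietoris_basic_eq_vietoris vietoris_def)
  moreover have "vietoris_basic X ?\<U> \<in> vietoris_basis X"
    using assms unfolding vietoris_basis_def by blast
  ultimately show ?thesis
    unfolding openin_hyperspace using vietoris_subset_topspace_hyperspace[of X U \<U>]
    by (auto simp: topspace_hyperspace intro!: generate_topology_on.Basis)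
qed

lemma closedin_hyperspace_vietoris:
  assumes "closedin X C" "finite \<C>" "\<forall>c\<in>\<C>. closedin X c"
  shows "closedin (hyperspace X) (vietoris X C \<C>)"
proof -
  have "topspace (hyperspace X) - vietoris X C \<C> =
      vietoris X (topspace X) {topspace X - C} \<union> (\<Union>c\<in>\<C>. vietoris X (topspace X - c) {})"
    by (auto simp: topspace_hyperspace vietoris_def dest: compactin_subset_topspace)
  moreover have "openin (hyperspace X) \<dots>"
    using assms by (intro openin_Un openin_Union) (auto intro!: openin_hyperspace_vietoris)
  ultimately show ?thesis
    using vietoris_subset_topspace_hyperspace by (metis closedin_def)
qed

lemma generate_topology_on_vietoris_neighbourhood:
  assumes "generate_topology_on (vietoris_basis X) G" "K \<in> G" "compactin X K" "K \<noteq> {}"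
  shows "\<exists>U \<U>. openin X U \<and> finite \<U> \<and> (\<forall>u\<in>\<U>. openin X u) \<and>
           K \<in> vietoris X U \<U> \<and> vietoris X U \<U> \<subseteq> G"
  using assms
proof (induction arbitrary: K)
  case Empty
  then show ?case by simp
next
  case (Int A B)
  obtain U \<U> where U: "openin X U" "finite \<U>" "\<forall>u\<in>\<U>. openin X u"
    and UA: "K \<in> vietoris X U \<U>" "vietoris X U \<U> \<subseteq> A"
    using Int.IH(1)[of K] Int.prems by blast
  obtain V \<V> where V: "openin X V" "finite \<V>" "\<forall>v\<in>\<V>. openin X v"
    and VB: "K \<in> vietoris X V \<V>" "vietoris X V \<V> \<subseteq> B"
    using Int.IH(2)[of K] Int.prems by blast
  have "K \<in> vietoris X (U \<inter> V) (\<U> \<union> \<V>)" "vietoris X (U \<inter> V) (\<U> \<union> \<V>) \<subseteq> A \<inter> B"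
    using UA VB by (simp_all add: vietoris_Int[symmetric] le_infI1 le_infI2 Int_mono)
  moreover have "openin X (U \<inter> V)" "finite (\<U> \<union> \<V>)" "\<forall>w\<in>\<U> \<union> \<V>. openin X w"
    using U V by auto
  ultimately show ?case
    by blast
next
  case (UN \<G>)
  then obtain A where "A \<in> \<G>" "K \<in> A"
    by blast
  with UN.IH[of A K] UN.prems show ?case
    by (meson Union_upper order_trans)
next
  case (Basis G)
  then obtain \<U> where "G = vietoris X (\<Union>\<U>) \<U>" "finite \<U>" "\<forall>u\<in>\<U>. openin X u"
    unfolding vietoris_basis_def vietoris_basic_eq_vietoris by blast
  moreover have "openin X (\<Union>\<U>)"
    using calculation by blast
  ultimately show ?case
    using Basis.prems by blast
qed

lemma hyperspace_vietoris_neighbourhood: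
  assumes "openin (hyperspace X) \<W>" "K \<in> \<W>"
  obtains U \<U> where "openin X U" "finite \<U>" "\<forall>u\<in>\<U>. openin X u"
    "K \<in> vietoris X U \<U>" "vietoris X U \<U> \<subseteq> \<W>"
proof -
  obtain G where G: "generate_topology_on (vietoris_basis X) G"
    and \<W>: "\<W> = G \<inter> {K. compactin X K \<and> K \<noteq> {}}"
    using assms(1) unfolding openin_hyperspace by blast
  then have K: "K \<in> G" "compactin X K" "K \<noteq> {}"
    using assms(2) by auto
  obtain U \<U> where U: "openin X U" "finite \<U>" "\<forall>u\<in>\<U>. openin X u" "K \<in> vietoris X U \<U>"
    and "vietoris X U \<U> \<subseteq> G"
    using generate_topology_on_vietoris_neighbourhood[OF G K] by blast
  moreover have "vietoris X U \<U> \<subseteq> {K. compactin X K \<and> K \<noteq> {}}"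
    by (auto simp: vietoris_def)
  ultimately have "vietoris X U \<U> \<subseteq> \<W>"
    unfolding \<W> by blast
  with U show thesis
    by (rule that)
qed

lemma regular_space_compact_closure_subset:
  assumes "regular_space X" "compactin X K" "openin X U" "K \<subseteq> U"
  obtains V where "openin X V" "K \<subseteq> V" "X closure_of V \<subseteq> U"
proof -
  have "closedin X (topspace X - U)" "disjnt K (topspace X - U)"
    using assms(3,4) by (auto simp: disjnt_def)
  then obtain A B where AB: "openin X A" "openin X B" "K \<subseteq> A" "topspace X - U \<subseteq> B" "disjnt A B"
    by (meson regular_space_compact_closed_separation[OF assms(1,2)])
  then have "X closure_of A \<subseteq> topspace X - B"
    by (intro closure_of_minimal) (auto simp: disjnt_def dest: openin_subset)
  with AB(4) have "X closure_of A \<subseteq> U"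
    by blast
  with AB(1,3) show thesis
    by (rule that)
qed

lemma vietoris_shrink:
  assumes "regular_space X" "openin X U" "\<forall>u\<in>\<U>. openin X u" "finite \<U>" "K \<in> vietoris X U \<U>"
  obtains V \<V> where "openin X V" "finite \<V>" "\<forall>v\<in>\<V>. openin X v" "K \<in> vietoris X V \<V>"
    "X closure_of V \<subseteq> U" "\<forall>u\<in>\<U>. \<exists>v\<in>\<V>. X closure_of v \<subseteq> u"
proof -
  have K: "compactin X K" "K \<subseteq> U" "\<forall>u\<in>\<U>. K \<inter> u \<noteq> {}"
    using assms(5) by (auto simp: vietoris_def)
  obtain V where V: "openin X V" "K \<subseteq> V" "X closure_of V \<subseteq> U"
    using regular_space_compact_closure_subset[OF assms(1) K(1) assms(2) K(2)] .
  have "\<exists>v. openin X v \<and> K \<inter> v \<noteq> {} \<and> X closure_of v \<subseteq> u" if u: "u \<in> \<U>" for u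
  proof -
    obtain x where x: "x \<in> K" "x \<in> u"
      using K(3) u by blast
    then have "compactin X {x}" "openin X u" "{x} \<subseteq> u"
      using K(1) compactin_subset_topspace assms(3) u by auto
    then obtain v where "openin X v" "{x} \<subseteq> v" "X closure_of v \<subseteq> u"
      by (rule regular_space_compact_closure_subset[OF assms(1)])
    with x show ?thesis
      by blast
  qed
  then obtain g where g: "\<And>u. u \<in> \<U> \<Longrightarrow> openin X (g u) \<and> K \<inter> g u \<noteq> {} \<and> X closure_of g u \<subseteq> u"
    by metis
  show thesis
  proof (rule that)
    show "K \<in> vietoris X V (g ` \<U>)"
      using assms(5) V(2) g by (auto simp: vietoris_def)
    show "\<forall>u\<in>\<U>. \<exists>v\<in>g ` \<U>. X closure_of v \<subseteq> u"
      using g by blast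
    show "finite (g ` \<U>)"
      using assms(4) by simp
    show "\<forall>v\<in>g ` \<U>. openin X v"
      using g by blast
  qed (use V in auto)
qed

lemma regular_space_hyperspace:
  assumes "regular_space X"
  shows "regular_space (hyperspace X)"
  unfolding neighbourhood_base_of_closedin[symmetric] neighbourhood_base_of
proof (intro allI impI)
  fix \<W> K assume "openin (hyperspace X) \<W> \<and> K \<in> \<W>"
  then have "openin (hyperspace X) \<W>" "K \<in> \<W>"
    by auto
  then obtain U \<U> where U: "openin X U" "finite \<U>" "\<forall>u\<in>\<U>. openin X u"
    and K: "K \<in> vietoris X U \<U>" and sub: "vietoris X U \<U> \<subseteq> \<W>"
    by (rule hyperspace_vietoris_neighbourhood)
  obtain V \<V> where V: "openin X V" "finite \<V>" "\<forall>v\<in>\<V>. openin X v" "K \<in> vietoris X V \<V>"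
    and shrink: "X closure_of V \<subseteq> U" "\<forall>u\<in>\<U>. \<exists>v\<in>\<V>. X closure_of v \<subseteq> u"
    using vietoris_shrink[OF assms U(1,3,2) K] .
  let ?C = "vietoris X (X closure_of V) ((closure_of) X ` \<V>)"
  have "vietoris X V \<V> \<subseteq> ?C"
    by (rule vietoris_subset_closure)
  moreover have "?C \<subseteq> vietoris X U \<U>"
    using shrink by (intro vietoris_mono) auto
  moreover have "closedin (hyperspace X) ?C"
    using V by (intro closedin_hyperspace_vietoris) auto
  moreover have "openin (hyperspace X) (vietoris X V \<V>)"
    using V by (intro openin_hyperspace_vietoris)
  ultimately show "\<exists>A B. openin (hyperspace X) A \<and> closedin (hyperspace X) B \<and> K \<in> A \<and> A \<subseteq> B \<and> B \<subseteq> \<W>"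
    using V(4) sub by (intro exI[of _ "vietoris X V \<V>"] exI[of _ ?C]) auto
qed

lemma compactin_obtain_finite_subcover:
  assumes "compactin Y S" "\<And>x. x \<in> S \<Longrightarrow> openin Y (W x) \<and> x \<in> W x"
  obtains F where "finite F" "F \<subseteq> S" "S \<subseteq> (\<Union>x\<in>F. W x)"
proof -
  obtain \<F> where \<F>: "finite \<F>" "\<F> \<subseteq> W ` S" "S \<subseteq> \<Union>\<F>"
    using compactinD[OF assms(1), of "W ` S"] assms(2) by blast
  obtain F where "F \<subseteq> S" "finite F" "\<F> = W ` F"
    using finite_subset_image[OF \<F>(1,2)] by blast
  with \<F>(3) show thesis
    by (intro that) auto
qed

lemma compactin_Union_hyperspace:
  assumes "compactin (hyperspace X) \<K>"
  shows "compactin X (\<Union>\<K>)"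
  unfolding compactin_def
proof (intro conjI allI impI)
  have \<K>: "\<K> \<subseteq> {K. compactin X K \<and> K \<noteq> {}}"
    using compactin_subset_topspace[OF assms] by (simp add: topspace_hyperspace)
  then show "\<Union>\<K> \<subseteq> topspace X"
    using compactin_subset_topspace by blast
  fix \<O> assume \<O>: "(\<forall>U\<in>\<O>. openin X U) \<and> \<Union>\<K> \<subseteq> \<Union>\<O>"
  have "\<forall>K\<in>\<K>. \<exists>\<F>. finite \<F> \<and> \<F> \<subseteq> \<O> \<and> K \<subseteq> \<Union>\<F>"
  proof
    fix K assume "K \<in> \<K>"
    then show "\<exists>\<F>. finite \<F> \<and> \<F> \<subseteq> \<O> \<and> K \<subseteq> \<Union>\<F>"
      using \<K> \<O> by (intro compactinD) auto
  qed
  from bchoice[OF this] obtain f where f_all: "\<forall>K\<in>\<K>. finite (f K) \<and> f K \<subseteq> \<O> \<and> K \<subseteq> \<Union>(f K)"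
    ..
  then have f: "finite (f K)" "f K \<subseteq> \<O>" "K \<subseteq> \<Union>(f K)" if "K \<in> \<K>" for K
    using bspec[OF f_all that] by simp_all
  have open_f: "openin X (\<Union>(f K))" if "K \<in> \<K>" for K
    using f(2)[OF that] \<O> by (metis openin_Union subsetD)
  have "openin (hyperspace X) (vietoris X (\<Union>(f K)) {}) \<and> K \<in> vietoris X (\<Union>(f K)) {}"
    if K: "K \<in> \<K>" for K
  proof (rule conjI)
    show "openin (hyperspace X) (vietoris X (\<Union>(f K)) {})"
      using open_f[OF K] by (simp add: openin_hyperspace_vietoris)
    show "K \<in> vietoris X (\<Union>(f K)) {}"
      using f(3)[OF K] K \<K> by (auto simp: vietoris_def)
  qed
  then obtain F where F: "finite F" "F \<subseteq> \<K>" "\<K> \<subseteq> (\<Union>K\<in>F. vietoris X (\<Union>(f K)) {})"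
    by (rule compactin_obtain_finite_subcover[OF assms])
  show "\<exists>\<F>. finite \<F> \<and> \<F> \<subseteq> \<O> \<and> \<Union>\<K> \<subseteq> \<Union>\<F>"
  proof (intro exI conjI)
    show "finite (\<Union>(f ` F))"
      using F(1,2) f(1) by (simp add: subset_iff)
    show "\<Union>(f ` F) \<subseteq> \<O>"
      using F(2) f(2) by blast
    show "\<Union>\<K> \<subseteq> \<Union>(\<Union>(f ` F))"
    proof
      fix x assume "x \<in> \<Union>\<K>"
      then obtain L where "L \<in> \<K>" "x \<in> L"
        by blast
      then obtain K where "K \<in> F" "L \<in> vietoris X (\<Union>(f K)) {}"
        using F(3) by blast
      with \<open>x \<in> L\<close> show "x \<in> \<Union>(\<Union>(f ` F))"
        by (auto simp: vietoris_def)
    qed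
  qed
qed

lemma k_networkE:
  assumes "k_network Y \<P>" "compactin Y K" "openin Y U" "K \<subseteq> U"
  obtains \<F> where "\<F> \<subseteq> \<P>" "finite \<F>" "K \<subseteq> \<Union>\<F>" "\<Union>\<F> \<subseteq> U"
  using assms unfolding k_network_def by meson

definition hyperspace_network :: "'a topology \<Rightarrow> 'a set set \<Rightarrow> 'a set set set" where
  "hyperspace_network X \<P> = (\<lambda>\<F>. vietoris X (\<Union>\<F>) \<F>) ` {\<F>. finite \<F> \<and> \<F> \<subseteq> \<P>}"

lemma hyperspace_network_cover:
  assumes "finite \<G>" "\<G> \<subseteq> \<P>" "\<K> \<subseteq> topspace (hyperspace X)" "\<Union>\<K> \<subseteq> \<Union>\<G>" "\<Union>\<G> \<subseteq> U"
    and meets: "\<And>u L. u \<in> \<U> \<Longrightarrow> L \<in> \<K> \<Longrightarrow> \<exists>P\<in>\<G>. P \<subseteq> u \<and> L \<inter> P \<noteq> {}"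
  obtains \<N> where "finite \<N>" "\<N> \<subseteq> hyperspace_network X \<P>" "\<K> \<subseteq> \<Union>\<N>" "\<Union>\<N> \<subseteq> vietoris X U \<U>"
proof -
  define trace where "trace L = {P \<in> \<G>. L \<inter> P \<noteq> {}}" for L
  define \<N> where "\<N> = (\<lambda>L. vietoris X (\<Union>(trace L)) (trace L)) ` \<K>"
  show thesis
  proof (rule that)
    have "\<N> \<subseteq> (\<lambda>\<F>. vietoris X (\<Union>\<F>) \<F>) ` Pow \<G>"
      unfolding \<N>_def trace_def by blast
    then show "finite \<N>"
      using assms(1) by (meson finite_Pow_iff finite_imageI finite_subset)
    show "\<N> \<subseteq> hyperspace_network X \<P>"
      unfolding \<N>_def hyperspace_network_def trace_def using assms(1,2) by auto
    show "\<K> \<subseteq> \<Union>\<N>"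
    proof
      fix L assume "L \<in> \<K>"
      have "L \<subseteq> \<Union>(trace L)"
      proof
        fix x assume "x \<in> L"
        then obtain P where "P \<in> \<G>" "x \<in> P"
          using \<open>L \<in> \<K>\<close> assms(4) by blast
        with \<open>x \<in> L\<close> show "x \<in> \<Union>(trace L)"
          by (auto simp: trace_def)
      qed
      with \<open>L \<in> \<K>\<close> have "L \<in> vietoris X (\<Union>(trace L)) (trace L)"
        using assms(3) by (auto simp: topspace_hyperspace vietoris_def trace_def)
      with \<open>L \<in> \<K>\<close> show "L \<in> \<Union>\<N>"
        unfolding \<N>_def by blast
    qed
    show "\<Union>\<N> \<subseteq> vietoris X U \<U>"
    proof
      fix M assume "M \<in> \<Union>\<N>"
      then obtain L where L: "L \<in> \<K>" "M \<in> vietoris X (\<Union>(trace L)) (trace L)"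
        unfolding \<N>_def by blast
      have "M \<inter> u \<noteq> {}" if u: "u \<in> \<U>" for u
      proof -
        obtain P where P: "P \<in> \<G>" "P \<subseteq> u" "L \<inter> P \<noteq> {}"
          using meets[OF u L(1)] by blast
        then have "P \<in> trace L"
          by (simp add: trace_def)
        with L(2) have "M \<inter> P \<noteq> {}"
          by (simp add: vietoris_def)
        with P(2) show ?thesis
          by blast
      qed
      moreover have "M \<subseteq> U"
        using L(2) assms(5) unfolding vietoris_def trace_def by blast
      ultimately show "M \<in> vietoris X U \<U>"
        using L(2) by (simp add: vietoris_def)
    qed
  qed
qed

lemma k_network_vietoris_cover:
  assumes "k_network X \<P>" "compactin (hyperspace X) \<K>"
    and "\<Union>\<K> \<subseteq> U" "openin X U" "finite \<U>" "\<forall>u\<in>\<U>. openin X u"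
    and closed_meets: "\<And>u. u \<in> \<U> \<Longrightarrow> \<exists>C. closedin X C \<and> C \<subseteq> u \<and> (\<forall>L\<in>\<K>. L \<inter> C \<noteq> {})"
  obtains \<N> where "finite \<N>" "\<N> \<subseteq> hyperspace_network X \<P>" "\<K> \<subseteq> \<Union>\<N>" "\<Union>\<N> \<subseteq> vietoris X U \<U>"
proof -
  have M: "compactin X (\<Union>\<K>)"
    using compactin_Union_hyperspace[OF assms(2)] .
  obtain \<F> where \<F>: "\<F> \<subseteq> \<P>" "finite \<F>" "\<Union>\<K> \<subseteq> \<Union>\<F>" "\<Union>\<F> \<subseteq> U"
    by (rule k_networkE[OF assms(1) M assms(4,3)])
  have "\<forall>u\<in>\<U>. \<exists>\<F>. \<F> \<subseteq> \<P> \<and> finite \<F> \<and> \<Union>\<F> \<subseteq> U \<and> (\<forall>P\<in>\<F>. P \<subseteq> u) \<and>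
          (\<forall>L\<in>\<K>. \<exists>P\<in>\<F>. L \<inter> P \<noteq> {})"
  proof
    fix u assume u: "u \<in> \<U>"
    obtain C where C: "closedin X C" "C \<subseteq> u" "\<forall>L\<in>\<K>. L \<inter> C \<noteq> {}"
      using closed_meets[OF u] by blast
    have "compactin X (C \<inter> \<Union>\<K>)" "openin X (u \<inter> U)" "C \<inter> \<Union>\<K> \<subseteq> u \<inter> U"
      using closed_Int_compactin[OF C(1) M] assms(3,4,6) u C(2) by auto
    then obtain \<F> where \<F>: "\<F> \<subseteq> \<P>" "finite \<F>" "C \<inter> \<Union>\<K> \<subseteq> \<Union>\<F>" "\<Union>\<F> \<subseteq> u \<inter> U"
      by (rule k_networkE[OF assms(1)])
    have meets: "\<exists>P\<in>\<F>. L \<inter> P \<noteq> {}" if L: "L \<in> \<K>" for L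
    proof -
      obtain x where x: "x \<in> L" "x \<in> C"
        using C(3) L by blast
      then have "x \<in> C \<inter> \<Union>\<K>"
        using L by blast
      with \<F>(3) obtain P where "P \<in> \<F>" "x \<in> P"
        by auto
      with x(1) show ?thesis
        by auto
    qed
    show "\<exists>\<F>. \<F> \<subseteq> \<P> \<and> finite \<F> \<and> \<Union>\<F> \<subseteq> U \<and> (\<forall>P\<in>\<F>. P \<subseteq> u) \<and>
          (\<forall>L\<in>\<K>. \<exists>P\<in>\<F>. L \<inter> P \<noteq> {})"
    proof (intro exI[of _ \<F>] conjI)
      show "\<Union>\<F> \<subseteq> U" "\<forall>P\<in>\<F>. P \<subseteq> u"
        using \<F>(4) by auto
      show "\<forall>L\<in>\<K>. \<exists>P\<in>\<F>. L \<inter> P \<noteq> {}"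
        using meets by simp
    qed (fact \<F>(1,2))+
  qed
  from bchoice[OF this] obtain g where g: "\<forall>u\<in>\<U>. g u \<subseteq> \<P> \<and> finite (g u) \<and> \<Union>(g u) \<subseteq> U \<and>
      (\<forall>P\<in>g u. P \<subseteq> u) \<and> (\<forall>L\<in>\<K>. \<exists>P\<in>g u. L \<inter> P \<noteq> {})"
    ..
  then have g_u: "g u \<subseteq> \<P>" "finite (g u)" "\<Union>(g u) \<subseteq> U" "\<forall>P\<in>g u. P \<subseteq> u"
      "\<forall>L\<in>\<K>. \<exists>P\<in>g u. L \<inter> P \<noteq> {}" if "u \<in> \<U>" for u
    using bspec[OF g that] by simp_all
  show thesis
  proof (rule hyperspace_network_cover[where \<G> = "\<F> \<union> \<Union>(g ` \<U>)"])
    show "finite (\<F> \<union> \<Union>(g ` \<U>))"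
      using \<F>(2) g_u(2) assms(5) by simp
    show "\<F> \<union> \<Union>(g ` \<U>) \<subseteq> \<P>"
      using \<F>(1) g_u(1) by blast
    show "\<Union>(\<F> \<union> \<Union>(g ` \<U>)) \<subseteq> U"
      using \<F>(4) g_u(3) by blast
    show "\<K> \<subseteq> topspace (hyperspace X)"
      using compactin_subset_topspace[OF assms(2)] .
    show "\<Union>\<K> \<subseteq> \<Union>(\<F> \<union> \<Union>(g ` \<U>))"
      using \<F>(3) by blast
    show "\<exists>P\<in>\<F> \<union> \<Union>(g ` \<U>). P \<subseteq> u \<and> L \<inter> P \<noteq> {}" if u: "u \<in> \<U>" and L: "L \<in> \<K>" for u L
    proof -
      obtain P where "P \<in> g u" "L \<inter> P \<noteq> {}"
        using g_u(5)[OF u] L by blast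
      with g_u(4)[OF u] u show ?thesis
        by blast
    qed
  qed (rule that)
qed

lemma hyperspace_network_local_cover:
  assumes "regular_space X" "k_network X \<P>" "compactin (hyperspace X) \<K>"
    and "openin (hyperspace X) \<W>" "K \<in> \<W>"
  shows "\<exists>\<O> \<N>. openin (hyperspace X) \<O> \<and> K \<in> \<O> \<and> finite \<N> \<and> \<N> \<subseteq> hyperspace_network X \<P> \<and>
           \<K> \<inter> \<O> \<subseteq> \<Union>\<N> \<and> \<Union>\<N> \<subseteq> \<W>"
proof -
  obtain U \<U> where U: "openin X U" "finite \<U>" "\<forall>u\<in>\<U>. openin X u"
    and K: "K \<in> vietoris X U \<U>" and sub: "vietoris X U \<U> \<subseteq> \<W>"
    using assms(4,5) by (rule hyperspace_vietoris_neighbourhood)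
  obtain V \<V> where V: "openin X V" "finite \<V>" "\<forall>v\<in>\<V>. openin X v" "K \<in> vietoris X V \<V>"
    and shrink: "X closure_of V \<subseteq> U" "\<forall>u\<in>\<U>. \<exists>v\<in>\<V>. X closure_of v \<subseteq> u"
    using vietoris_shrink[OF assms(1) U(1,3,2) K] .
  define C where "C = vietoris X (X closure_of V) ((closure_of) X ` \<V>)"
  have "closedin (hyperspace X) C"
    unfolding C_def using V(2) by (intro closedin_hyperspace_vietoris) auto
  then have compact: "compactin (hyperspace X) (\<K> \<inter> C)"
    by (metis assms(3) closed_Int_compactin inf_commute)
  have inside: "\<Union>(\<K> \<inter> C) \<subseteq> U"
    using shrink(1) by (auto simp: C_def vietoris_def)
  have meets: "\<exists>D. closedin X D \<and> D \<subseteq> u \<and> (\<forall>L\<in>\<K> \<inter> C. L \<inter> D \<noteq> {})" if u: "u \<in> \<U>" for u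
  proof -
    obtain v where "v \<in> \<V>" "X closure_of v \<subseteq> u"
      using shrink(2) u by blast
    then show ?thesis
      by (intro exI[of _ "X closure_of v"]) (auto simp: C_def vietoris_def)
  qed
  obtain \<N> where \<N>: "finite \<N>" "\<N> \<subseteq> hyperspace_network X \<P>"
    "\<K> \<inter> C \<subseteq> \<Union>\<N>" "\<Union>\<N> \<subseteq> vietoris X U \<U>"
    by (rule k_network_vietoris_cover[OF assms(2) compact inside U(1,2,3) meets])
  have "\<K> \<inter> vietoris X V \<V> \<subseteq> \<Union>\<N>"
    using vietoris_subset_closure[of X V \<V>] \<N>(3) unfolding C_def by blast
  moreover have "openin (hyperspace X) (vietoris X V \<V>)"
    using V by (intro openin_hyperspace_vietoris)
  ultimately show ?thesis
    using V(4) \<N>(1,2,4) sub by (intro exI[of _ "vietoris X V \<V>"] exI[of _ \<N>]) blast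
qed

lemma compactin_finite_cover_of_local_covers:
  assumes "compactin Y S"
    and "\<And>x. x \<in> S \<Longrightarrow> \<exists>V \<N>. openin Y V \<and> x \<in> V \<and> finite \<N> \<and> \<N> \<subseteq> \<P> \<and> S \<inter> V \<subseteq> \<Union>\<N> \<and> \<Union>\<N> \<subseteq> W"
  shows "\<exists>\<N>. \<N> \<subseteq> \<P> \<and> finite \<N> \<and> S \<subseteq> \<Union>\<N> \<and> \<Union>\<N> \<subseteq> W"
proof -
  have "\<forall>x\<in>S. \<exists>V \<N>. openin Y V \<and> x \<in> V \<and> finite \<N> \<and> \<N> \<subseteq> \<P> \<and> S \<inter> V \<subseteq> \<Union>\<N> \<and> \<Union>\<N> \<subseteq> W"
    using assms(2) by blast
  from bchoice[OF this] obtain V where "\<forall>x\<in>S. \<exists>\<N>. openin Y (V x) \<and> x \<in> V x \<and> finite \<N> \<and> \<N> \<subseteq> \<P> \<and>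
      S \<inter> V x \<subseteq> \<Union>\<N> \<and> \<Union>\<N> \<subseteq> W"
    ..
  from bchoice[OF this] obtain \<N> where local: "\<forall>x\<in>S. openin Y (V x) \<and> x \<in> V x \<and> finite (\<N> x) \<and>
      \<N> x \<subseteq> \<P> \<and> S \<inter> V x \<subseteq> \<Union>(\<N> x) \<and> \<Union>(\<N> x) \<subseteq> W"
    ..
  then have V: "openin Y (V x) \<and> x \<in> V x" and \<N>: "finite (\<N> x)" "\<N> x \<subseteq> \<P>"
      "S \<inter> V x \<subseteq> \<Union>(\<N> x)" "\<Union>(\<N> x) \<subseteq> W" if "x \<in> S" for x
    using bspec[OF local that] by simp_all
  obtain F where F: "finite F" "F \<subseteq> S" "S \<subseteq> (\<Union>x\<in>F. V x)"
    using V by (rule compactin_obtain_finite_subcover[OF assms(1)])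
  show ?thesis
  proof (intro exI conjI)
    show "\<Union>(\<N> ` F) \<subseteq> \<P>" "\<Union>(\<Union>(\<N> ` F)) \<subseteq> W"
      using F(2) \<N>(2,4) by blast+
    show "finite (\<Union>(\<N> ` F))"
      using F(1,2) \<N>(1) by auto
    show "S \<subseteq> \<Union>(\<Union>(\<N> ` F))"
    proof
      fix z assume "z \<in> S"
      then obtain y where "y \<in> F" "z \<in> V y"
        using F(3) by blast
      with \<open>z \<in> S\<close> F(2) \<N>(3) have "z \<in> \<Union>(\<N> y)"
        by blast
      with \<open>y \<in> F\<close> show "z \<in> \<Union>(\<Union>(\<N> ` F))"
        by blast
    qed
  qed
qed

lemma k_network_hyperspace:
  assumes "regular_space X" "k_network X \<P>"
  shows "k_network (hyperspace X) (hyperspace_network X \<P>)"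
  unfolding k_network_def
proof (intro conjI allI impI)
  show "\<forall>N\<in>hyperspace_network X \<P>. N \<subseteq> topspace (hyperspace X)"
    using vietoris_subset_topspace_hyperspace by (auto simp: hyperspace_network_def)
  fix \<K> \<W> assume "compactin (hyperspace X) \<K> \<and> openin (hyperspace X) \<W> \<and> \<K> \<subseteq> \<W>"
  then show "\<exists>\<N>. \<N> \<subseteq> hyperspace_network X \<P> \<and> finite \<N> \<and> \<K> \<subseteq> \<Union>\<N> \<and> \<Union>\<N> \<subseteq> \<W>"
    using hyperspace_network_local_cover[OF assms]
    by (intro compactin_finite_cover_of_local_covers) auto
qed

lemma compact_countable_hyperspace:
  assumes "compact_countable X \<P>"
  shows "compact_countable (hyperspace X) (hyperspace_network X \<P>)"
  unfolding compact_countable_def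
proof (intro allI impI)
  fix \<K> assume "compactin (hyperspace X) \<K>"
  then have "countable {P \<in> \<P>. P \<inter> \<Union>\<K> \<noteq> {}}"
    using assms compactin_Union_hyperspace unfolding compact_countable_def by blast
  then have "countable ((\<lambda>\<F>. vietoris X (\<Union>\<F>) \<F>) ` {\<F>. finite \<F> \<and> \<F> \<subseteq> {P \<in> \<P>. P \<inter> \<Union>\<K> \<noteq> {}}})"
    by (intro countable_image countable_Collect_finite_subset)
  moreover have "{N \<in> hyperspace_network X \<P>. N \<inter> \<K> \<noteq> {}} \<subseteq>
      (\<lambda>\<F>. vietoris X (\<Union>\<F>) \<F>) ` {\<F>. finite \<F> \<and> \<F> \<subseteq> {P \<in> \<P>. P \<inter> \<Union>\<K> \<noteq> {}}}"
  proof
    fix N assume "N \<in> {N \<in> hyperspace_network X \<P>. N \<inter> \<K> \<noteq> {}}"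
    then obtain \<F> L where \<F>: "finite \<F>" "\<F> \<subseteq> \<P>" "N = vietoris X (\<Union>\<F>) \<F>"
      and L: "L \<in> N" "L \<in> \<K>"
      unfolding hyperspace_network_def by blast
    have "P \<inter> \<Union>\<K> \<noteq> {}" if "P \<in> \<F>" for P
    proof -
      have "L \<inter> P \<noteq> {}"
        using L(1) \<F>(3) that by (simp add: vietoris_def)
      with L(2) show ?thesis
        by blast
    qed
    with \<F>(2) have "\<F> \<subseteq> {P \<in> \<P>. P \<inter> \<Union>\<K> \<noteq> {}}"
      by blast
    with \<F>(1) show "N \<in> (\<lambda>\<F>. vietoris X (\<Union>\<F>) \<F>) ` {\<F>. finite \<F> \<and> \<F> \<subseteq> {P \<in> \<P>. P \<inter> \<Union>\<K> \<noteq> {}}}"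
      unfolding \<F>(3) by (intro imageI) simp
  qed
  ultimately show "countable {N \<in> hyperspace_network X \<P>. N \<inter> \<K> \<noteq> {}}"
    by (rule countable_subset[rotated])
qed

lemma closedin_hyperspace_network:
  assumes "\<forall>P\<in>\<P>. closedin X P" "N \<in> hyperspace_network X \<P>"
  shows "closedin (hyperspace X) N"
proof -
  obtain \<F> where "finite \<F>" "\<F> \<subseteq> \<P>" "N = vietoris X (\<Union>\<F>) \<F>"
    using assms(2) unfolding hyperspace_network_def by blast
  with assms(1) show ?thesis
    by (metis closedin_Union closedin_hyperspace_vietoris subsetD)
qed

lemma continuous_map_singleton_hyperspace: "continuous_map X (hyperspace X) (\<lambda>x. {x})"
  unfolding hyperspace_def vietoris_basis_def[symmetric] continuous_map_in_subtopology
proof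
  show "continuous_map X (topology_generated_by (vietoris_basis X)) (\<lambda>x. {x})"
  proof (rule continuous_on_generated_topo)
    fix B assume "B \<in> vietoris_basis X"
    then obtain \<U> where \<U>: "B = vietoris_basic X \<U>" "finite \<U>" "\<U> \<noteq> {}" "\<forall>U\<in>\<U>. openin X U"
      unfolding vietoris_basis_def by blast
    then have "(\<lambda>x. {x}) -` B \<inter> topspace X = topspace X \<inter> \<Inter>\<U>"
      by (auto simp: vietoris_basic_def)
    moreover have "openin X (\<Inter>\<U>)"
      using \<U>(2-4) by (intro openin_Inter) auto
    ultimately show "openin X ((\<lambda>x. {x}) -` B \<inter> topspace X)"
      by auto
  next
    have "{x} \<in> vietoris_basic X {topspace X}" if "x \<in> topspace X" for x
      using that by (auto simp: vietoris_basic_def)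
    moreover have "vietoris_basic X {topspace X} \<in> vietoris_basis X"
      unfolding vietoris_basis_def by blast
    ultimately show "(\<lambda>x. {x}) ` topspace X \<subseteq> \<Union>(vietoris_basis X)"
      by blast
  qed
  show "(\<lambda>x. {x}) \<in> topspace X \<rightarrow> {K. K \<subseteq> topspace X \<and> compactin X K \<and> K \<noteq> {}}"
    by auto
qed

lemma k_network_preimage:
  assumes f: "continuous_map X Y f"
    and initial: "\<And>U. openin X U \<Longrightarrow> \<exists>W. openin Y W \<and> U = {x \<in> topspace X. f x \<in> W}"
    and "k_network Y \<Q>"
  shows "k_network X ((\<lambda>Q. {x \<in> topspace X. f x \<in> Q}) ` \<Q>)"
  unfolding k_network_def
proof (intro conjI allI impI)
  show "\<forall>P\<in>(\<lambda>Q. {x \<in> topspace X. f x \<in> Q}) ` \<Q>. P \<subseteq> topspace X"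
    by blast
  fix K U assume KU: "compactin X K \<and> openin X U \<and> K \<subseteq> U"
  then obtain W where W: "openin Y W" "U = {x \<in> topspace X. f x \<in> W}"
    using initial by blast
  have "compactin Y (f ` K)"
    using KU image_compactin f by blast
  moreover have "f ` K \<subseteq> W"
    using KU W(2) by blast
  ultimately obtain \<Q>' where \<Q>': "\<Q>' \<subseteq> \<Q>" "finite \<Q>'" "f ` K \<subseteq> \<Union>\<Q>'" "\<Union>\<Q>' \<subseteq> W"
    by (rule k_networkE[OF assms(3) _ W(1)])
  show "\<exists>\<P>'. \<P>' \<subseteq> (\<lambda>Q. {x \<in> topspace X. f x \<in> Q}) ` \<Q> \<and> finite \<P>' \<and> K \<subseteq> \<Union>\<P>' \<and> \<Union>\<P>' \<subseteq> U"
  proof (intro exI conjI)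
    show "(\<lambda>Q. {x \<in> topspace X. f x \<in> Q}) ` \<Q>' \<subseteq> (\<lambda>Q. {x \<in> topspace X. f x \<in> Q}) ` \<Q>"
      "finite ((\<lambda>Q. {x \<in> topspace X. f x \<in> Q}) ` \<Q>')"
      using \<Q>'(1,2) by auto
    show "K \<subseteq> \<Union>((\<lambda>Q. {x \<in> topspace X. f x \<in> Q}) ` \<Q>')"
    proof
      fix x assume "x \<in> K"
      then obtain Q where "Q \<in> \<Q>'" "f x \<in> Q"
        using \<Q>'(3) by blast
      moreover have "x \<in> topspace X"
        using \<open>x \<in> K\<close> KU compactin_subset_topspace by auto
      ultimately show "x \<in> \<Union>((\<lambda>Q. {x \<in> topspace X. f x \<in> Q}) ` \<Q>')"
        by blast
    qed
    show "\<Union>((\<lambda>Q. {x \<in> topspace X. f x \<in> Q}) ` \<Q>') \<subseteq> U"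
      using \<Q>'(4) W(2) by blast
  qed
qed

lemma compact_countable_preimage:
  assumes f: "continuous_map X Y f" and "compact_countable Y \<Q>"
  shows "compact_countable X ((\<lambda>Q. {x \<in> topspace X. f x \<in> Q}) ` \<Q>)"
  unfolding compact_countable_def
proof (intro allI impI)
  fix K assume "compactin X K"
  then have "countable {Q \<in> \<Q>. Q \<inter> f ` K \<noteq> {}}"
    using assms(2) image_compactin f unfolding compact_countable_def by blast
  then have "countable ((\<lambda>Q. {x \<in> topspace X. f x \<in> Q}) ` {Q \<in> \<Q>. Q \<inter> f ` K \<noteq> {}})"
    by (rule countable_image)
  moreover have "{P \<in> (\<lambda>Q. {x \<in> topspace X. f x \<in> Q}) ` \<Q>. P \<inter> K \<noteq> {}} \<subseteq>
      (\<lambda>Q. {x \<in> topspace X. f x \<in> Q}) ` {Q \<in> \<Q>. Q \<inter> f ` K \<noteq> {}}"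
    by blast
  ultimately show "countable {P \<in> (\<lambda>Q. {x \<in> topspace X. f x \<in> Q}) ` \<Q>. P \<inter> K \<noteq> {}}"
    by (rule countable_subset[rotated])
qed

lemma openin_singleton_preimage_hyperspace:
  assumes "openin X U"
  shows "\<exists>\<W>. openin (hyperspace X) \<W> \<and> U = {x \<in> topspace X. {x} \<in> \<W>}"
proof (intro exI conjI)
  show "openin (hyperspace X) (vietoris X U {})"
    using assms by (simp add: openin_hyperspace_vietoris)
  show "U = {x \<in> topspace X. {x} \<in> vietoris X U {}}"
    using openin_subset[OF assms] by (auto simp: vietoris_def)
qed

theorem corollary3p5:
  fixes X :: "'a topology"
  assumes "regular_space X" and "Hausdorff_space X"
  shows "(aleph_k_space X \<longleftrightarrow> aleph_k_space (hyperspace X)) \<and>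
         (closed_aleph_k_space X \<longleftrightarrow> closed_aleph_k_space (hyperspace X))"
proof -
  define trace where "trace \<Q> = (\<lambda>Q. {x \<in> topspace X. {x} \<in> Q}) ` \<Q>" for \<Q>
  note singleton = continuous_map_singleton_hyperspace[of X]
  have up: "k_network (hyperspace X) (hyperspace_network X \<P>)"
    "compact_countable (hyperspace X) (hyperspace_network X \<P>)"
    if "k_network X \<P>" "compact_countable X \<P>" for \<P>
    using that by (simp_all add: k_network_hyperspace[OF assms(1)] compact_countable_hyperspace)
  have down: "k_network X (trace \<Q>)" "compact_countable X (trace \<Q>)"
    if "k_network (hyperspace X) \<Q>" "compact_countable (hyperspace X) \<Q>" for \<Q>
    unfolding trace_def using that
    by (simp_all add: k_network_preimage[OF singleton openin_singleton_preimage_hyperspace] compact_countable_preimage[OF singleton])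
  have closed_up: "\<forall>N\<in>hyperspace_network X \<P>. closedin (hyperspace X) N" if "\<forall>P\<in>\<P>. closedin X P" for \<P>
    using closedin_hyperspace_network[OF that] by blast
  have closed_down: "\<forall>P\<in>trace \<Q>. closedin X P" if "\<forall>Q\<in>\<Q>. closedin (hyperspace X) Q" for \<Q>
    unfolding trace_def using closedin_continuous_map_preimage[OF singleton] that by blast
  show ?thesis
    unfolding aleph_k_space_def closed_aleph_k_space_def
    using assms(1) regular_space_hyperspace[OF assms(1)] up down closed_up closed_down by blast
qed

end
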